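(* Let $X,Y$ be real Hilbert spaces and $T:X\to Y$ a nonzero, injective, bounded linear operator. Let $x^\dagger\in X$, $y^\dagger:=Tx^\dagger$, $x_0\in X$, and $\alpha>0$. Set $x_{\alpha,0}:=x_0$ and, for integers $k\ge1$, let $x_{\alpha,k}$ be the unique minimizer over $x\in X$ of $\|y^\dagger-Tx\|^2+\alpha\|x-x_{\alpha,k-1}\|^2$ (stationary iterated Tikhonov regularization). Let $k\ge1$ be an integer and $0\le\nu\le k$ real. Then $$N_{\nu/k}^{1-2k}\|x^\dagger-x_0\|_{\nu:k}\le\sup_{\alpha>0}\alpha^{-\nu}\|x^\dagger-x_{\alpha,k}\|\le\|x^\dagger-x_0\|_{\nu:k}.$$ If $\nu=k$, then $\sup_{\alpha>0}$ can be replaced by $\lim_{\alpha\searrow0}$.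
   Context: For $\gamma>0$, $X_\gamma:=\mathrm{range}((T^*T)^\gamma)$ with norm $\|x\|_\gamma:=\|(T^*T)^{-\gamma}x\|$. For $x\in X$ and $t>0$, $K^\gamma_t(x):=\inf_{x_1\in X_\gamma}\big(\|x-x_1\|^2+t^2\|x_1\|_\gamma^2\big)^{1/2}$, and for $0\le\nu\le\gamma$, $\|x\|_{\nu:\gamma}:=\sup_{t>0}t^{-\nu/\gamma}K^\gamma_t(x)\in[0,\infty]$. For $0<\theta<1$, $N_\theta:=\big(\theta^\theta(1-\theta)^{1-\theta}\big)^{-1/2}$, and $N_0:=N_1:=1$. *)

theory Defs
  imports "HOL-Analysis.Analysis" "HOL-Computational_Algebra.Polynomial"
begin

text \<open>Real Hilbert spaces are modelled by the type class combination
  real_inner + complete_space.\<close>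

text \<open>Hilbert-space adjoint of a bounded linear operator T (exists by Riesz).\<close>
definition adj :: "('a::real_inner \<Rightarrow> 'b::real_inner) \<Rightarrow> 'b \<Rightarrow> 'a" where
  "adj T y = (THE x. \<forall>z. inner (T z) y = inner z x)"

definition poly_op :: "real poly \<Rightarrow> ('a::real_vector \<Rightarrow> 'a) \<Rightarrow> 'a \<Rightarrow> 'a" where
  "poly_op p A x = (\<Sum>i\<le>degree p. coeff p i *\<^sub>R (A ^^ i) x)"

text \<open>Continuous functional calculus for a positive self-adjoint bounded operator A:
  f(A) x is the limit of p(A) x as the polynomials p converge to f uniformly on
  [0, norm A] (which contains the spectrum of A).\<close>
definition fcalc :: "('a::real_normed_vector \<Rightarrow> 'a) \<Rightarrow> (real \<Rightarrow> real) \<Rightarrow> 'a \<Rightarrow> 'a" where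
  "fcalc A f x = (THE y. \<forall>\<epsilon>>0. \<exists>\<delta>>0. \<forall>p.
      (\<forall>t\<in>{0..onorm A}. \<bar>poly p t - f t\<bar> < \<delta>) \<longrightarrow> norm (poly_op p A x - y) < \<epsilon>)"

definition TTpow :: "('a::real_inner \<Rightarrow> 'b::real_inner) \<Rightarrow> real \<Rightarrow> 'a \<Rightarrow> 'a" where
  "TTpow T \<gamma> = fcalc (adj T \<circ> T) (\<lambda>t. t powr \<gamma>)"

definition Xspace :: "('a::real_inner \<Rightarrow> 'b::real_inner) \<Rightarrow> real \<Rightarrow> 'a set" where
  "Xspace T \<gamma> = range (TTpow T \<gamma>)"

text \<open>norm_\<gamma> x = norm ((T^*T)^(-\<gamma>) x) for x in X_\<gamma> (preimage is unique as T is injective)\<close>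
definition gnorm :: "('a::real_inner \<Rightarrow> 'b::real_inner) \<Rightarrow> real \<Rightarrow> 'a \<Rightarrow> real" where
  "gnorm T \<gamma> x = norm (THE z. TTpow T \<gamma> z = x)"

definition Kfun :: "('a::real_inner \<Rightarrow> 'b::real_inner) \<Rightarrow> real \<Rightarrow> real \<Rightarrow> 'a \<Rightarrow> real" where
  "Kfun T \<gamma> t x = Inf ((\<lambda>x1. sqrt ((norm (x - x1))\<^sup>2 + t\<^sup>2 * (gnorm T \<gamma> x1)\<^sup>2)) ` Xspace T \<gamma>)"

definition interp_norm :: "('a::real_inner \<Rightarrow> 'b::real_inner) \<Rightarrow> real \<Rightarrow> real \<Rightarrow> 'a \<Rightarrow> ereal" where
  "interp_norm T \<nu> \<gamma> x = (SUP t\<in>{0<..}. ereal (t powr (-\<nu>/\<gamma>) * Kfun T \<gamma> t x))"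

definition Nconst :: "real \<Rightarrow> real" where
  "Nconst \<theta> = (if 0 < \<theta> \<and> \<theta> < 1 then (\<theta> powr \<theta> * (1-\<theta>) powr (1-\<theta>)) powr (-1/2) else 1)"

fun tikh :: "('a::real_inner \<Rightarrow> 'b::real_inner) \<Rightarrow> 'b \<Rightarrow> 'a \<Rightarrow> real \<Rightarrow> nat \<Rightarrow> 'a" where
  "tikh T y x0 \<alpha> 0 = x0"
| "tikh T y x0 \<alpha> (Suc k) = (THE x. \<forall>z.
      (norm (y - T x))\<^sup>2 + \<alpha> * (norm (x - tikh T y x0 \<alpha> k))\<^sup>2
      \<le> (norm (y - T z))\<^sup>2 + \<alpha> * (norm (z - tikh T y x0 \<alpha> k))\<^sup>2)"

end

theory Submission
  imports Defs "HOL-Computational_Algebra.Fundamental_Theorem_Algebra"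
begin

text \<open>With \<open>A = T\<^sup>*T\<close>, the error of stationary iterated Tikhonov regularization is
  \<open>x\<^sup>\<dagger> - x\<^sub>\<alpha>\<^sub>,\<^sub>k = \<alpha>\<^sup>k (\<alpha> + A)\<^sup>-\<^sup>k (x\<^sup>\<dagger> - x\<^sub>0)\<close>, so both estimates reduce to inequalities between
  polynomials in \<open>A\<close>. These transfer to operator inequalities because a polynomial that is
  nonnegative on \<open>[0, \<parallel>A\<parallel>]\<close> gives a positive operator, which follows from a weak spectral mapping
  theorem proved with the fundamental theorem of algebra.
  Comparing \<open>(\<alpha> + \<lambda>)\<^sup>2\<^sup>k\<close> with \<open>\<alpha>\<^sup>2\<^sup>k + \<lambda>\<^sup>2\<^sup>k\<close> bounds the error by the \<open>K\<close>-functional at \<open>t = \<alpha>\<^sup>k\<close>,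
  which gives the upper estimate. Conversely, for every \<open>t\<close> and every weight \<open>w \<in> (0,1)\<close>, convexity
  of \<open>\<lambda> \<mapsto> \<lambda>\<^sup>2\<^sup>k\<close> turns the regularized solution for a suitably balanced \<open>\<alpha>\<close> into a competitor in
  the \<open>K\<close>-functional at \<open>t\<close>; optimizing over \<open>w\<close> produces the constant \<open>N\<^sub>\<nu>\<^sub>/\<^sub>k\<^sup>1\<^sup>-\<^sup>2\<^sup>k\<close>.
  For \<open>\<nu> = k\<close> the scaled error \<open>\<alpha>\<^sup>-\<^sup>k (x\<^sup>\<dagger> - x\<^sub>\<alpha>\<^sub>,\<^sub>k) = (\<alpha> + A)\<^sup>-\<^sup>k (x\<^sup>\<dagger> - x\<^sub>0)\<close> decreases in
  norm as \<open>\<alpha>\<close> grows, so the supremum is the limit at \<open>0\<close>.\<close>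

section \<open>Real inequalities\<close>

lemma linear_coeff_eq_0_if_quadratic_nonneg:
  fixes b c :: real
  assumes "\<And>s. 0 \<le> s * b + s\<^sup>2 * c"
  shows "b = 0"
proof (rule ccontr)
  assume b: "b \<noteq> 0"
  have c: "c \<ge> 0" using assms[of 1] assms[of "-1"] by (simp add: power2_eq_square)
  define s where "s = - b / (c + 1)"
  have c1: "c + 1 \<noteq> 0" using c by simp
  have "b + s * c = b / (c + 1)" using c1 unfolding s_def by (simp add: field_simps)
  then have "s * b + s\<^sup>2 * c = s * (b / (c + 1))"
    by (metis distrib_left mult.assoc power2_eq_square)
  also have "\<dots> = - (b * b) / ((c + 1) * (c + 1))" unfolding s_def by simp
  also have "\<dots> < 0"
    using b c by (intro divide_neg_pos) (auto simp: zero_less_mult_iff add_nonneg_pos)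
  finally show False using assms[of s] by linarith
qed

lemma discriminant_le_if_quadratic_nonneg:
  fixes \<alpha> \<beta> \<gamma> :: real
  assumes h: "\<And>s. 0 \<le> \<alpha> + 2 * s * \<beta> + s\<^sup>2 * \<gamma>" and g: "\<gamma> \<ge> 0"
  shows "\<beta>\<^sup>2 \<le> \<alpha> * \<gamma>"
proof (cases "\<gamma> = 0")
  case True
  have "\<beta> = 0"
    using linear_coeff_eq_0_if_quadratic_nonneg[of "2 * \<beta>" 0] h[of "-(\<alpha> + 1) / (2 * \<beta>)"] True
    by (cases "\<beta> = 0") (auto simp: field_simps)
  then show ?thesis using True by simp
next
  case False
  then have gp: "\<gamma> > 0" using g by simp
  have "0 \<le> \<alpha> + 2 * (-\<beta>/\<gamma>) * \<beta> + (-\<beta>/\<gamma>)\<^sup>2 * \<gamma>" by (rule h)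
  also have "\<dots> = \<alpha> - \<beta>\<^sup>2 / \<gamma>" using gp by (simp add: field_simps power2_eq_square)
  finally show ?thesis using gp by (simp add: divide_le_eq mult.commute)
qed

lemma power_add_le_add_power:
  fixes x y :: real
  assumes "0 \<le> x" "0 \<le> y" "n \<ge> 1"
  shows "x ^ n + y ^ n \<le> (x + y) ^ n"
  using assms(3)
proof (induction n rule: dec_induct)
  case (step n)
  have "x ^ Suc n + y ^ Suc n \<le> (x + y) * (x ^ n + y ^ n)"
    using assms by (simp add: algebra_simps)
  also have "\<dots> \<le> (x + y) * (x + y) ^ n" using step.IH assms by (intro mult_left_mono) auto
  finally show ?case by simp
qed simp

lemma even_power_add_le_weighted:
  fixes l a w :: real
  assumes w: "0 < w" "w < 1" and k: "k \<ge> 1"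
  shows "(l + a) ^ (2*k) \<le> l ^ (2*k) / (1 - w) ^ (2*k - 1) + a ^ (2*k) / w ^ (2*k - 1)"
proof -
  have kk: "2*k = Suc (2*k - 1)" using k by simp
  have "convex_on UNIV (\<lambda>x::real. x ^ (2*k))" by (rule convex_power_even) simp
  then have "((1 - w) *\<^sub>R (l / (1 - w)) + w *\<^sub>R (a / w)) ^ (2*k)
        \<le> (1 - w) * (l / (1 - w)) ^ (2*k) + w * (a / w) ^ (2*k)"
    using convex_onD[of UNIV _ w "l / (1 - w)" "a / w"] w by simp
  moreover have "(1 - w) *\<^sub>R (l / (1 - w)) + w *\<^sub>R (a / w) = l + a" using w by simp
  moreover have "(1 - w) * (l / (1 - w)) ^ (2*k) = l ^ (2*k) / (1 - w) ^ (2*k - 1)"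
    "w * (a / w) ^ (2*k) = a ^ (2*k) / w ^ (2*k - 1)"
    using w by (subst (1 2) kk, simp add: power_divide)+
  ultimately show ?thesis by simp
qed

lemma scaled_shifted_power_le:
  fixes l \<alpha> w t :: real
  assumes w: "0 < w" "w < 1" and k: "k \<ge> 1" and \<alpha>: "\<alpha> > 0"
    and balance: "\<alpha> ^ (2*k) * (1 - w) ^ (2*k - 1) = t\<^sup>2 * w ^ (2*k - 1)"
  shows "t\<^sup>2 / \<alpha> ^ (2*k) * (l + \<alpha>) ^ (2*k) \<le> (l ^ (2*k) + t\<^sup>2) / w ^ (2*k - 1)"
proof -
  define a W V where "a = \<alpha> ^ (2*k)" and "W = w ^ (2*k - 1)" and "V = (1 - w) ^ (2*k - 1)"
  have pos: "0 < a" "0 < W" "0 < V" unfolding a_def W_def V_def using w \<alpha> by auto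
  have "t\<^sup>2 / a * (l + \<alpha>) ^ (2*k) \<le> t\<^sup>2 / a * (l ^ (2*k) / V + a / W)"
    using even_power_add_le_weighted[OF w k] pos unfolding a_def V_def W_def by (intro mult_left_mono) auto
  also have "\<dots> = t\<^sup>2 / (a * V) * l ^ (2*k) + t\<^sup>2 / W" using pos by (simp add: field_simps)
  also have "t\<^sup>2 / (a * V) = 1 / W"
  proof -
    have "a * V = t\<^sup>2 * W" using balance unfolding a_def V_def W_def .
    moreover from this have "t \<noteq> 0" using pos by auto
    ultimately show ?thesis using pos by (simp add: field_simps)
  qed
  finally show ?thesis unfolding a_def W_def by (simp add: add_divide_distrib)
qed

lemma balanced_parameter_exists:
  fixes t w \<theta> :: real
  assumes t: "t > 0" and w: "0 < w" "w < 1" and k: "k \<ge> 1"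
  obtains \<alpha> where "\<alpha> > 0" "\<alpha> ^ (2*k) * (1 - w) ^ (2*k - 1) = t\<^sup>2 * w ^ (2*k - 1)"
    "t powr (-\<theta>) * \<alpha> powr (\<theta> * real k) / sqrt (w ^ (2*k - 1))
       = (w powr (1 - \<theta>) * (1 - w) powr \<theta>) powr (- (real (2*k - 1) / 2))"
proof
  define n where "n = 2*k - 1"
  define X where "X = t\<^sup>2 * (w / (1 - w)) ^ n"
  define \<alpha> where "\<alpha> = X powr (1 / real (2*k))"
  have X: "X > 0" unfolding X_def using t w by simp
  show \<alpha>: "\<alpha> > 0" unfolding \<alpha>_def using X by simp
  have "\<alpha> ^ (2*k) = X"
    using X k by (simp add: \<alpha>_def powr_powr flip: powr_realpow)
  then show "\<alpha> ^ (2*k) * (1 - w) ^ (2*k - 1) = t\<^sup>2 * w ^ (2*k - 1)"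
    unfolding X_def n_def using w by (simp add: power_divide)
  have rn: "real n = 2 * real k - 1" unfolding n_def using k by (simp add: of_nat_diff)
  have ln_\<alpha>: "ln \<alpha> = (2 * ln t + real n * (ln w - ln (1 - w))) / (2 * real k)"
    unfolding \<alpha>_def X_def using t w k by (simp add: ln_mult ln_div ln_realpow ln_powr field_simps)
  have "ln (t powr (-\<theta>) * \<alpha> powr (\<theta> * real k) / sqrt (w ^ n))
      = -\<theta> * ln t + \<theta> * real k * ln \<alpha> - real n * ln w / 2"
    using t w \<alpha> by (simp add: ln_mult ln_div ln_sqrt ln_realpow)
  also have "\<dots> = ln ((w powr (1 - \<theta>) * (1 - w) powr \<theta>) powr (- (real n / 2)))"
    using w k unfolding ln_\<alpha> by (simp add: ln_mult rn field_simps)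
  finally show "t powr (-\<theta>) * \<alpha> powr (\<theta> * real k) / sqrt (w ^ (2*k - 1))
      = (w powr (1 - \<theta>) * (1 - w) powr \<theta>) powr (- (real (2*k - 1) / 2))"
    using t w \<alpha> unfolding n_def by (subst (asm) ln_inj_iff) auto
qed

text \<open>\<open>N\<^sub>\<theta>\<^sup>2\<close> is the minimum over \<open>w \<in> (0,1)\<close> of \<open>1 / (w\<^sup>1\<^sup>-\<^sup>\<theta> (1 - w)\<^sup>\<theta>)\<close>; for
  \<open>0 < \<theta> < 1\<close> it is attained at \<open>w = 1 - \<theta>\<close>, in the end cases only in the limit.\<close>

lemma Nconst_powr_mult_le:
  fixes x s \<theta> m :: real
  assumes \<theta>: "0 \<le> \<theta>" "\<theta> \<le> 1"
    and bound: "\<And>w. 0 < w \<Longrightarrow> w < 1 \<Longrightarrow> x \<le> (w powr (1 - \<theta>) * (1 - w) powr \<theta>) powr (-m) * s"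
  shows "Nconst \<theta> powr (- 2 * m) * x \<le> s"
proof -
  consider "\<theta> = 0" | "\<theta> = 1" | "0 < \<theta> \<and> \<theta> < 1" using \<theta> by linarith
  then show ?thesis
  proof cases
    case 1
    have "eventually (\<lambda>w. w \<in> {0<..<1}) (at_left (1::real))" by (rule eventually_at_left_real) simp
    then have "eventually (\<lambda>w. x \<le> w powr (-m) * s) (at_left (1::real))"
      by eventually_elim (use bound 1 in simp)
    moreover have "((\<lambda>w. w powr (-m) * s) \<longlongrightarrow> s) (at_left 1)"
      by (auto intro!: tendsto_eq_intros)
    ultimately have "x \<le> s" by (intro tendsto_lowerbound) auto
    then show ?thesis using 1 by (simp add: Nconst_def)
  next
    case 2
    have "eventually (\<lambda>w. w \<in> {0<..<1}) (at_right (0::real))" by (rule eventually_at_right_real) simp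
    then have "eventually (\<lambda>w. x \<le> (1 - w) powr (-m) * s) (at_right (0::real))"
      by eventually_elim (use bound 2 in simp)
    moreover have "((\<lambda>w. (1 - w) powr (-m) * s) \<longlongrightarrow> s) (at_right 0)"
      by (auto intro!: tendsto_eq_intros)
    ultimately have "x \<le> s" by (intro tendsto_lowerbound) auto
    then show ?thesis using 2 by (simp add: Nconst_def)
  next
    case 3
    define B where "B = \<theta> powr \<theta> * (1 - \<theta>) powr (1 - \<theta>)"
    have B: "B > 0" unfolding B_def using 3 by simp
    have "Nconst \<theta> powr (- 2 * m) = B powr m"
      using 3 by (simp add: Nconst_def B_def powr_powr)
    moreover have "x \<le> B powr (-m) * s"
      using bound[of "1 - \<theta>"] 3 by (simp add: B_def mult.commute)
    ultimately show ?thesis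
      using B by (simp add: mult_left_mono powr_minus field_simps)
  qed
qed

section \<open>Quadratic minimization in Hilbert spaces\<close>

lemma midpoint_strongly_convex_attains_min:
  fixes J :: "'a::{real_inner,complete_space} \<Rightarrow> real"
  assumes cont: "continuous_on UNIV J" and lb: "\<And>x. m0 \<le> J x" and c: "c > 0"
    and mid: "\<And>x z. c * (norm (x - z))\<^sup>2 \<le> J x + J z - 2 * J ((1/2) *\<^sub>R (x + z))"
  shows "\<exists>x. \<forall>z. J x \<le> J z"
proof -
  define m where "m = Inf (range J)"
  have bdd: "bdd_below (range J)" using lb by (meson bdd_belowI2)
  have mle: "m \<le> J x" for x unfolding m_def using bdd by (simp add: cInf_lower)
  have "\<exists>x. J x < m + 1 / (real n + 1)" for n
    using cInf_lessD[of "range J" "m + 1 / (real n + 1)"] unfolding m_def by auto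
  then obtain X where X: "\<And>n. J (X n) < m + 1 / (real n + 1)" by metis
  have JX: "(\<lambda>n. J (X n)) \<longlonglongrightarrow> m"
  proof (rule tendsto_sandwich[of "\<lambda>n. m" _ _ "\<lambda>n. m + 1 / (real n + 1)"])
    show "\<forall>\<^sub>F n in sequentially. m \<le> J (X n)" using mle by simp
    show "\<forall>\<^sub>F n in sequentially. J (X n) \<le> m + 1 / (real n + 1)"
      using X by (intro always_eventually allI) (simp add: less_imp_le)
    show "(\<lambda>n. m + 1 / (real n + 1)) \<longlonglongrightarrow> m"
      using tendsto_add[OF tendsto_const LIMSEQ_inverse_real_of_nat]
      by (simp add: inverse_eq_divide add.commute)
  qed simp
  \<comment> \<open>Minimizing sequences are Cauchy: the midpoint of two of them is no better than \<open>m\<close>.\<close>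
  have "Cauchy X"
  proof (rule metric_CauchyI)
    fix e :: real assume e: "e > 0"
    obtain N :: nat where N: "1 / (real N + 1) < c * e\<^sup>2 / 2"
      using reals_Archimedean[of "c * e\<^sup>2 / 2"] c e by (auto simp: inverse_eq_divide add.commute)
    have "dist (X p) (X n) < e" if "p \<ge> N" "n \<ge> N" for p n
    proof -
      have "1 / (real p + 1) \<le> 1 / (real N + 1)" "1 / (real n + 1) \<le> 1 / (real N + 1)"
        using that by (auto intro!: divide_left_mono)
      then have "c * (norm (X p - X n))\<^sup>2 < c * e\<^sup>2"
        using mid[of "X p" "X n"] mle[of "(1/2) *\<^sub>R (X p + X n)"] X[of p] X[of n] N by linarith
      then have "(norm (X p - X n))\<^sup>2 < e\<^sup>2" using c by simp
      then show ?thesis using e by (simp add: dist_norm power_less_imp_less_base)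
    qed
    then show "\<exists>M. \<forall>p\<ge>M. \<forall>n\<ge>M. dist (X p) (X n) < e" by blast
  qed
  then obtain l where l: "X \<longlonglongrightarrow> l" using convergent_eq_Cauchy by blast
  have "(\<lambda>n. J (X n)) \<longlonglongrightarrow> J l" using continuous_on_tendsto_compose[OF cont l] by simp
  then have "J l = m" using JX LIMSEQ_unique by blast
  then show ?thesis using mle by auto
qed

text \<open>A symmetric Lax--Milgram theorem, proved by minimizing \<open>\<langle>P x, x\<rangle> - 2 f x\<close>.\<close>

lemma coercive_operator_represents_functional:
  fixes P :: "'a::{real_inner,complete_space} \<Rightarrow> 'a" and f :: "'a \<Rightarrow> real"
  assumes P: "bounded_linear P" and sym: "\<And>u v. inner (P u) v = inner u (P v)"
    and c: "c > 0" and coercive: "\<And>u. c * (norm u)\<^sup>2 \<le> inner (P u) u"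
    and f: "bounded_linear f"
  shows "\<exists>x. \<forall>z. inner (P x) z = f z"
proof -
  interpret P: bounded_linear P by (fact P)
  interpret f: bounded_linear f by (fact f)
  obtain K where K: "\<And>x. \<bar>f x\<bar> \<le> norm x * K" using f.bounded by auto
  define J where "J x = inner (P x) x - 2 * f x" for x
  have expand: "J (x + s *\<^sub>R z) = J x + s * (2 * inner (P x) z - 2 * f z) + s\<^sup>2 * inner (P z) z"
    for x z s
    using sym[of z x] unfolding J_def
    by (simp add: P.add P.scale f.add f.scale inner_add_left inner_add_right inner_commute
        power2_eq_square algebra_simps)
  have cont: "continuous_on UNIV J"
    unfolding J_def by (intro continuous_intros P.continuous_on f.continuous_on)
  have lb: "- K\<^sup>2 / c \<le> J x" for x
  proof -
    have "c * (norm x)\<^sup>2 - 2 * (norm x * K) \<le> J x"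
      using coercive[of x] K[of x] unfolding J_def by linarith
    then have "c * (c * (norm x)\<^sup>2 - 2 * (norm x * K)) \<le> c * J x" using c by simp
    moreover have "0 \<le> c * (c * (norm x)\<^sup>2 - 2 * (norm x * K)) + K\<^sup>2"
      using zero_le_power2[of "c * norm x - K"] by (simp add: power2_eq_square algebra_simps)
    ultimately show ?thesis using c by (simp add: field_simps)
  qed
  have mid: "c / 2 * (norm (x - z))\<^sup>2 \<le> J x + J z - 2 * J ((1/2) *\<^sub>R (x + z))" for x z
  proof -
    have "z = x + (-1) *\<^sub>R (x - z)" "(1/2) *\<^sub>R (x + z) = x + (-1/2) *\<^sub>R (x - z)"
      by (simp_all add: algebra_simps flip: scaleR_add_left)
    then have "J z = J (x + (-1) *\<^sub>R (x - z))"
      "J ((1/2) *\<^sub>R (x + z)) = J (x + (-1/2) *\<^sub>R (x - z))" by simp_all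
    then have "J x + J z - 2 * J ((1/2) *\<^sub>R (x + z)) = 1/2 * inner (P (x - z)) (x - z)"
      unfolding expand by (simp add: power2_eq_square algebra_simps)
    then show ?thesis using coercive[of "x - z"] by simp
  qed
  obtain x where x: "\<And>z. J x \<le> J z"
    using midpoint_strongly_convex_attains_min[OF cont lb _ mid] c by auto
  have "inner (P x) z = f z" for z
  proof -
    have "0 \<le> s * (2 * inner (P x) z - 2 * f z) + s\<^sup>2 * inner (P z) z" for s
      using x[of "x + s *\<^sub>R z"] unfolding expand by linarith
    then show ?thesis using linear_coeff_eq_0_if_quadratic_nonneg by fastforce
  qed
  then show ?thesis by blast
qed

lemma adj_inner:
  fixes T :: "'a::{real_inner,complete_space} \<Rightarrow> 'b::real_inner"
  assumes "bounded_linear T"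
  shows "inner (T z) y = inner z (adj T y)"
proof -
  have "bounded_linear (\<lambda>z. inner (T z) y)"
    using bounded_linear_compose[OF bounded_linear_inner_left assms] .
  then obtain x where x: "\<And>z. inner x z = inner (T z) y"
    using coercive_operator_represents_functional[of "\<lambda>x. x" 1 "\<lambda>z. inner (T z) y"]
    by (auto simp: power2_norm_eq_inner bounded_linear_ident)
  have "adj T y = x"
    unfolding adj_def
  proof (rule the_equality)
    show "\<forall>z. inner (T z) y = inner z x" by (metis x inner_commute)
    fix x' assume "\<forall>z. inner (T z) y = inner z x'"
    then show "x' = x" using x vector_eq_ldot by (metis inner_commute)
  qed
  then show ?thesis by (metis x inner_commute)
qed

section \<open>Polynomials in an operator\<close>

lemma poly_op_eq_sum_atMost:
  assumes "degree p \<le> n"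
  shows "poly_op p B x = (\<Sum>i\<le>n. coeff p i *\<^sub>R (B ^^ i) x)"
  unfolding poly_op_def
  by (rule sum.mono_neutral_left) (use assms in \<open>auto simp: coeff_eq_0\<close>)

lemma poly_op_0 [simp]: "poly_op 0 B x = 0"
  by (simp add: poly_op_def)

lemma poly_op_const: "poly_op [:c:] B x = c *\<^sub>R x"
  by (simp add: poly_op_def)

lemma poly_op_add: "poly_op (p + q) B x = poly_op p B x + poly_op q B x"
proof -
  define n where "n = max (degree p) (degree q)"
  have "degree (p + q) \<le> n" unfolding n_def by (rule degree_add_le_max)
  then show ?thesis
    by (simp add: poly_op_eq_sum_atMost[of _ n] n_def scaleR_add_left sum.distrib)
qed

lemma poly_op_smult: "poly_op (smult c p) B x = c *\<^sub>R poly_op p B x"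
  by (simp add: poly_op_eq_sum_atMost[of _ "degree p"] scaleR_sum_right)

lemma poly_op_diff: "poly_op (p - q) B x = poly_op p B x - poly_op q B x"
  using poly_op_add[of p "-q" B x] poly_op_smult[of "-1" q B x] by simp

context
  fixes B :: "'a::real_vector \<Rightarrow> 'a"
  assumes B: "linear B"
begin

lemma poly_op_pCons_0: "poly_op (pCons 0 p) B x = B (poly_op p B x)"
proof -
  have "poly_op (pCons 0 p) B x = (\<Sum>i\<le>Suc (degree p). coeff (pCons 0 p) i *\<^sub>R (B ^^ i) x)"
    by (rule poly_op_eq_sum_atMost) (simp add: degree_pCons_le)
  also have "\<dots> = (\<Sum>i\<le>degree p. coeff p i *\<^sub>R (B ^^ Suc i) x)"
    by (subst sum.atMost_Suc_shift) simp
  also have "\<dots> = B (poly_op p B x)"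
    by (simp add: poly_op_def linear_sum[OF B] linear_scale[OF B])
  finally show ?thesis .
qed

lemma poly_op_pCons: "poly_op (pCons c p) B x = c *\<^sub>R x + B (poly_op p B x)"
proof -
  have "pCons c p = [:c:] + pCons 0 p" by simp
  then show ?thesis by (simp only: poly_op_add poly_op_const poly_op_pCons_0)
qed

lemma poly_op_mult: "poly_op (p * q) B x = poly_op p B (poly_op q B x)"
proof (induction p arbitrary: x)
  case (pCons c p)
  have "poly_op (pCons c p * q) B x = poly_op (smult c q + pCons 0 (p * q)) B x" by simp
  also have "\<dots> = poly_op (pCons c p) B (poly_op q B x)"
    by (simp add: poly_op_add poly_op_smult poly_op_pCons_0 poly_op_pCons pCons.IH)
  finally show ?case .
qed simp

lemma poly_op_commute: "poly_op p B (poly_op q B x) = poly_op q B (poly_op p B x)"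
  by (metis poly_op_mult mult.commute)

lemma poly_op_apply_commute: "poly_op p B (B x) = B (poly_op p B x)"
  using poly_op_commute[of p "[:0, 1:]" x] by (simp add: poly_op_def)

lemma poly_op_monom: "poly_op (monom 1 k) B x = (B ^^ k) x"
proof (induction k arbitrary: x)
  case (Suc k)
  have "monom (1::real) (Suc k) = pCons 0 (monom 1 k)" by (simp add: monom_Suc)
  then show ?case by (simp add: poly_op_pCons_0 Suc funpow_swap1)
qed (simp add: poly_op_def)

lemma linear_poly_op: "linear (poly_op p B)"
proof -
  have "poly_op p B (x + y) = poly_op p B x + poly_op p B y"
    and "poly_op p B (r *\<^sub>R x) = r *\<^sub>R poly_op p B x" for x y r
    by (induction p)
      (simp_all add: poly_op_pCons linear_add[OF B] linear_scale[OF B] algebra_simps)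
  then show ?thesis by (rule linearI)
qed

end

lemma bounded_linear_poly_op:
  assumes B: "bounded_linear B"
  shows "bounded_linear (poly_op p B)"
proof -
  have L: "linear B" using B bounded_linear.linear by blast
  obtain K where K: "\<And>x. norm (B x) \<le> norm x * K" "K \<ge> 0"
    using bounded_linear.pos_bounded[OF B] by (auto intro: less_imp_le)
  have "\<exists>M. \<forall>x. norm (poly_op p B x) \<le> norm x * M"
  proof (induction p)
    case (pCons c p)
    then obtain M where M: "\<And>x. norm (poly_op p B x) \<le> norm x * M" by blast
    have "norm (poly_op (pCons c p) B x) \<le> norm x * (\<bar>c\<bar> + M * K)" for x
    proof -
      have "norm (B (poly_op p B x)) \<le> norm x * M * K"
        using K(1)[of "poly_op p B x"] mult_right_mono[OF M K(2)] by (rule order_trans)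
      then show ?thesis
        using norm_triangle_ineq[of "c *\<^sub>R x" "B (poly_op p B x)"]
        by (simp add: poly_op_pCons[OF L] algebra_simps)
    qed
    then show ?case by blast
  qed (auto intro: exI[of _ 0])
  then show ?thesis
    using linear_poly_op[OF L] by (auto simp: bounded_linear_def bounded_linear_axioms_def ac_simps)
qed

text \<open>Evaluating a real polynomial at \<open>z \<in> \<complex>\<close> is \<open>poly_op\<close> for the real-linear map \<open>w \<mapsto> z w\<close>,
  which makes the evaluation homomorphism a special case of the lemmas above.\<close>

lemma poly_op_complex_mult:
  "poly_op p (\<lambda>w. z * w) w = poly (map_poly complex_of_real p) z * w"
proof -
  have "((\<lambda>w. z * w) ^^ i) w = z ^ i * w" for i by (induction i) auto
  moreover have "degree (map_poly complex_of_real p) = degree p" by (simp add: degree_map_poly)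
  ultimately show ?thesis
    by (simp add: poly_op_def poly_altdef coeff_map_poly scaleR_conv_of_real sum_distrib_right
        mult.assoc)
qed

lemma poly_map_poly_of_real_mult:
  "poly (map_poly complex_of_real (p * q)) z
     = poly (map_poly complex_of_real p) z * poly (map_poly complex_of_real q) z"
proof -
  have "linear (\<lambda>w::complex. z * w)" by (auto simp: linear_iff algebra_simps scaleR_conv_of_real)
  then show ?thesis
    using poly_op_mult[of "\<lambda>w. z * w" p q 1] by (simp add: poly_op_complex_mult)
qed

lemma poly_map_poly_of_real_add:
  "poly (map_poly complex_of_real (p + q)) z
     = poly (map_poly complex_of_real p) z + poly (map_poly complex_of_real q) z"
  using poly_op_add[of p q "\<lambda>w. z * w" 1] by (simp add: poly_op_complex_mult)

lemma real_poly_root_or_quadratic_factor: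
  fixes r :: "real poly"
  assumes "degree r > 0"
  obtains \<rho> where "poly r \<rho> = 0"
  | b c h where "b\<^sup>2 < 4 * c" "r = [:c, b, 1:] * h"
proof -
  let ?C = "map_poly complex_of_real"
  have "degree (?C r) = degree r" by (simp add: degree_map_poly)
  then have "\<not> constant (poly (?C r))" using assms by (simp add: constant_degree)
  then obtain z where z: "poly (?C r) z = 0" using fundamental_theorem_of_algebra by blast
  show thesis
  proof (cases "Im z = 0")
    case True
    then have "z = of_real (Re z)" by (simp add: complex_eq_iff)
    then have "of_real (poly r (Re z)) = poly (?C r) z"
      by (induction r) (auto simp: map_poly_pCons)
    then show thesis using that(1) z by simp
  next
    case False
    define Q where "Q = [:(Re z)\<^sup>2 + (Im z)\<^sup>2, -2 * Re z, 1:]"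
    have Q0: "Q \<noteq> 0" and dQ: "degree Q = 2" unfolding Q_def by simp_all
    have "poly (?C Q) z = 0"
      unfolding Q_def by (simp add: map_poly_pCons complex_eq_iff power2_eq_square algebra_simps)
    \<comment> \<open>The remainder of \<open>r\<close> modulo the real quadratic \<open>Q\<close> vanishes at the non-real point \<open>z\<close>.\<close>
    then have m: "poly (?C (r mod Q)) z = 0"
      using z poly_map_poly_of_real_add[of "Q * (r div Q)" "r mod Q" z]
        poly_map_poly_of_real_mult[of Q "r div Q" z] by simp
    define m0 m1 where "m0 = coeff (r mod Q) 0" and "m1 = coeff (r mod Q) 1"
    have "degree (r mod Q) \<le> 1" using degree_mod_less[OF Q0, of r] dQ by auto
    then have "r mod Q = [:m0, m1:]"
      unfolding m0_def m1_def by (intro poly_eqI) (auto simp: coeff_pCons coeff_eq_0 split: nat.split)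
    with m have "of_real m0 + of_real m1 * z = 0" by (simp add: map_poly_pCons mult.commute)
    then have "m1 * Im z = 0" "of_real m0 + of_real m1 * z = 0" by (simp_all add: complex_eq_iff)
    then have "r mod Q = 0" using False \<open>r mod Q = [:m0, m1:]\<close> by simp
    then have "r = Q * (r div Q)" by (metis add.right_neutral mult_div_mod_eq mult.commute)
    moreover have "(-2 * Re z)\<^sup>2 < 4 * ((Re z)\<^sup>2 + (Im z)\<^sup>2)"
      using False by (auto simp: power2_eq_square zero_less_mult_iff linorder_neq_iff)
    ultimately show thesis using that(2) unfolding Q_def by blast
  qed
qed

section \<open>Positive operators\<close>

definition bounded_below :: "('a::real_normed_vector \<Rightarrow> 'b::real_normed_vector) \<Rightarrow> bool" where
  "bounded_below B \<longleftrightarrow> (\<exists>c>0. \<forall>x. c * norm x \<le> norm (B x))"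

lemma bounded_below_comp:
  assumes "bounded_below B" "bounded_below C"
  shows "bounded_below (B \<circ> C)"
proof -
  obtain b c where b: "b > 0" "\<And>x. b * norm x \<le> norm (B x)" and c: "c > 0" "\<And>x. c * norm x \<le> norm (C x)"
    using assms unfolding bounded_below_def by blast
  have "b * c * norm x \<le> norm (B (C x))" for x
    using order_trans[OF mult_left_mono[OF c(2) less_imp_le[OF b(1)]] b(2)[of "C x"]]
    by (simp add: mult.assoc)
  then show ?thesis unfolding bounded_below_def using b c by (intro exI[of _ "b * c"]) auto
qed

lemma bounded_below_if_coercive:
  fixes B :: "'a::real_inner \<Rightarrow> 'a"
  assumes c: "c > 0" and coercive: "\<And>x. c * (norm x)\<^sup>2 \<le> \<bar>inner (B x) x\<bar>"
  shows "bounded_below B"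
  unfolding bounded_below_def
proof (intro exI[of _ c] conjI allI)
  fix x
  have "c * norm x * norm x \<le> norm (B x) * norm x"
    using coercive[of x] Cauchy_Schwarz_ineq2[of "B x" x] by (simp add: power2_eq_square mult.assoc)
  then show "c * norm x \<le> norm (B x)"
    by (cases "x = 0") (auto simp: mult_le_cancel_right)
qed (fact c)

locale positive_operator =
  fixes A :: "'a::{real_inner,complete_space} \<Rightarrow> 'a"
  assumes bounded_linear: "bounded_linear A"
    and symmetric: "\<And>u v. inner (A u) v = inner u (A v)"
    and nonneg: "\<And>u. 0 \<le> inner (A u) u"
begin

lemma linear: "linear A"
  using bounded_linear bounded_linear.linear by blast

lemma zero [simp]: "A 0 = 0"
  by (rule linear_0[OF linear])

lemma onorm_nonneg: "0 \<le> onorm A"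
  by (rule onorm_pos_le[OF bounded_linear])

lemma inner_le_onorm: "inner (A u) u \<le> onorm A * (norm u)\<^sup>2"
proof -
  have "inner (A u) u \<le> norm (A u) * norm u" by (rule norm_cauchy_schwarz)
  also have "\<dots> \<le> onorm A * norm u * norm u"
    by (intro mult_right_mono onorm[OF bounded_linear]) simp
  finally show ?thesis by (simp add: power2_eq_square)
qed

lemma cauchy_schwarz: "(inner (A x) y)\<^sup>2 \<le> inner (A x) x * inner (A y) y"
proof (rule discriminant_le_if_quadratic_nonneg)
  fix s :: real
  have "inner (A (x + s *\<^sub>R y)) (x + s *\<^sub>R y)
      = inner (A x) x + 2 * s * inner (A x) y + s\<^sup>2 * inner (A y) y"
    using symmetric[of y x]
    by (simp add: linear_add[OF linear] linear_scale[OF linear] inner_add_left inner_add_right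
        inner_commute power2_eq_square algebra_simps)
  then show "0 \<le> inner (A x) x + 2 * s * inner (A x) y + s\<^sup>2 * inner (A y) y"
    using nonneg[of "x + s *\<^sub>R y"] by simp
qed (rule nonneg)

lemma norm_sq_le_onorm_inner: "(norm (A x))\<^sup>2 \<le> onorm A * inner (A x) x"
proof -
  have "(norm (A x))\<^sup>2 * (norm (A x))\<^sup>2 = (inner (A x) (A x))\<^sup>2"
    by (unfold power2_norm_eq_inner) (rule power2_eq_square[symmetric])
  also have "\<dots> \<le> inner (A x) x * inner (A (A x)) (A x)" by (rule cauchy_schwarz)
  also have "\<dots> \<le> inner (A x) x * (onorm A * (norm (A x))\<^sup>2)"
    by (intro mult_left_mono inner_le_onorm nonneg)
  finally have "(norm (A x))\<^sup>2 * (norm (A x))\<^sup>2 \<le> (onorm A * inner (A x) x) * (norm (A x))\<^sup>2"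
    by (simp only: mult_ac)
  then show ?thesis by (cases "A x = 0") (simp, erule mult_right_le_imp_le, simp)
qed

lemma coercive_if_bounded_below:
  assumes "bounded_below A"
  obtains \<delta> where "\<delta> > 0" "\<And>x. \<delta> * (norm x)\<^sup>2 \<le> inner (A x) x"
proof -
  obtain c where c: "c > 0" "\<And>x. c * norm x \<le> norm (A x)"
    using assms unfolding bounded_below_def by blast
  have "c\<^sup>2 / (onorm A + 1) * (norm x)\<^sup>2 \<le> inner (A x) x" for x
  proof -
    have "(c * norm x)\<^sup>2 \<le> (norm (A x))\<^sup>2" using c by (intro power_mono) auto
    also have "\<dots> \<le> (onorm A + 1) * inner (A x) x"
      using norm_sq_le_onorm_inner[of x] nonneg[of x] by (simp add: distrib_right)
    finally show ?thesis
      using onorm_nonneg by (simp add: power_mult_distrib field_simps add_nonneg_pos)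
  qed
  then show thesis using that[of "c\<^sup>2 / (onorm A + 1)"] c onorm_nonneg by force
qed

lemma poly_op_symmetric: "inner (poly_op p A x) y = inner x (poly_op p A y)"
proof (induction p arbitrary: x y)
  case (pCons c p)
  then show ?case
    by (simp add: poly_op_pCons[OF linear] inner_add_left inner_add_right symmetric
        poly_op_apply_commute[OF linear])
qed simp

lemma norm_poly_op_sq: "(norm (poly_op p A x))\<^sup>2 = inner (poly_op (p * p) A x) x"
  using poly_op_symmetric[of p "poly_op p A x" x]
  by (simp add: power2_norm_eq_inner poly_op_mult[OF linear])

lemma bounded_below_linear_factor:
  assumes "\<rho> \<notin> {0..onorm A}"
  shows "bounded_below (poly_op [:-\<rho>, 1:] A)"
proof -
  have op: "inner (poly_op [:-\<rho>, 1:] A x) x = inner (A x) x - \<rho> * (norm x)\<^sup>2" for x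
    by (simp add: poly_op_pCons[OF linear] poly_op_const inner_diff_left power2_norm_eq_inner)
  show ?thesis
  proof (cases "\<rho> < 0")
    case True
    show ?thesis
    proof (rule bounded_below_if_coercive[of "-\<rho>"])
      fix x
      show "- \<rho> * (norm x)\<^sup>2 \<le> \<bar>inner (poly_op [:- \<rho>, 1:] A x) x\<bar>"
        unfolding op using nonneg[of x] abs_ge_self[of "inner (A x) x - \<rho> * (norm x)\<^sup>2"]
        by linarith
    qed (use True in simp)
  next
    case False
    then have \<rho>: "onorm A < \<rho>" using assms by auto
    show ?thesis
    proof (rule bounded_below_if_coercive[of "\<rho> - onorm A"])
      fix x
      show "(\<rho> - onorm A) * (norm x)\<^sup>2 \<le> \<bar>inner (poly_op [:- \<rho>, 1:] A x) x\<bar>"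
        unfolding op using inner_le_onorm[of x]
          abs_ge_minus_self[of "inner (A x) x - \<rho> * (norm x)\<^sup>2"]
        by (simp add: algebra_simps)
    qed (use \<rho> in simp)
  qed
qed

lemma bounded_below_quadratic_factor:
  assumes "b\<^sup>2 < 4 * c"
  shows "bounded_below (poly_op [:c, b, 1:] A)"
proof (rule bounded_below_if_coercive[of "c - b\<^sup>2 / 4"])
  show "0 < c - b\<^sup>2 / 4" using assms by simp
  fix x
  have op: "inner (poly_op [:c, b, 1:] A x) x = c * (norm x)\<^sup>2 + b * inner (A x) x + (norm (A x))\<^sup>2"
    using symmetric[of "A x" x]
    by (simp add: poly_op_pCons[OF linear] poly_op_const linear_add[OF linear]
        linear_scale[OF linear] inner_add_left power2_norm_eq_inner)
  have "\<bar>b * inner (A x) x\<bar> \<le> \<bar>b\<bar> * (norm (A x) * norm x)"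
    using Cauchy_Schwarz_ineq2[of "A x" x] by (simp add: abs_mult mult_left_mono)
  then have "- (\<bar>b\<bar> * (norm (A x) * norm x)) \<le> b * inner (A x) x" by linarith
  moreover have "0 \<le> (norm (A x) - \<bar>b\<bar> / 2 * norm x)\<^sup>2" by simp
  ultimately have "(c - b\<^sup>2 / 4) * (norm x)\<^sup>2 \<le> inner (poly_op [:c, b, 1:] A x) x"
    unfolding op by (simp add: power2_eq_square algebra_simps)
  then show "(c - b\<^sup>2 / 4) * (norm x)\<^sup>2 \<le> \<bar>inner (poly_op [:c, b, 1:] A x) x\<bar>" by linarith
qed

text \<open>A weak spectral mapping theorem: a polynomial without zeros on \<open>[0, \<parallel>A\<parallel>]\<close>, which
  contains the spectrum of \<open>A\<close>, is bounded below at \<open>A\<close>.\<close>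

lemma bounded_below_poly_op:
  assumes "r \<noteq> 0" "\<forall>t\<in>{0..onorm A}. poly r t \<noteq> 0"
  shows "bounded_below (poly_op r A)"
  using assms
proof (induction "degree r" arbitrary: r rule: less_induct)
  case less
  have factor: "bounded_below (poly_op r A)"
    if r: "r = f * h" and f: "bounded_below (poly_op f A)" "f \<noteq> 0" "degree f > 0" for f h
  proof -
    have "h \<noteq> 0" "degree h < degree r" using less.prems r f by (auto simp: degree_mult_eq)
    moreover have "\<forall>t\<in>{0..onorm A}. poly h t \<noteq> 0" using less.prems r by auto
    ultimately have "bounded_below (poly_op h A)" using less.hyps by blast
    moreover have "poly_op r A = poly_op f A \<circ> poly_op h A"
      unfolding r by (auto simp: poly_op_mult[OF linear])
    ultimately show ?thesis using bounded_below_comp f by metis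
  qed
  show ?case
  proof (cases "degree r = 0")
    case True
    then obtain c where "r = [:c:]" "c \<noteq> 0" using less.prems by (metis degree_eq_zeroE pCons_0_0)
    then show ?thesis
      by (auto simp: bounded_below_def poly_op_const intro!: exI[of _ "\<bar>c\<bar>"])
  next
    case False
    then have "degree r > 0" by simp
    then show ?thesis
    proof (cases rule: real_poly_root_or_quadratic_factor)
      case (1 \<rho>)
      then obtain h where r: "r = [:-\<rho>, 1:] * h" by (metis dvdE poly_eq_0_iff_dvd)
      have "\<rho> \<notin> {0..onorm A}" using 1 less.prems by auto
      then show ?thesis using factor[OF r bounded_below_linear_factor] by simp
    next
      case (2 b c h)
      then show ?thesis using factor[OF _ bounded_below_quadratic_factor] by simp
    qed
  qed
qed

lemma inner_poly_op_sq_complement: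
  "inner (poly_op ([:\<mu>\<^sup>2:] - q * q) A y) y = \<mu>\<^sup>2 * (norm y)\<^sup>2 - (norm (poly_op q A y))\<^sup>2"
  using norm_poly_op_sq[of q y]
  by (simp add: poly_op_diff poly_op_const inner_diff_left power2_norm_eq_inner)

lemma positive_operator_sq_complement:
  assumes "onorm (poly_op q A) \<le> \<mu>"
  shows "positive_operator (poly_op ([:\<mu>\<^sup>2:] - q * q) A)"
proof (rule positive_operator.intro)
  show "bounded_linear (poly_op ([:\<mu>\<^sup>2:] - q * q) A)"
    by (rule bounded_linear_poly_op[OF bounded_linear])
  show "inner (poly_op ([:\<mu>\<^sup>2:] - q * q) A u) v = inner u (poly_op ([:\<mu>\<^sup>2:] - q * q) A v)" for u v
    by (rule poly_op_symmetric)
  show "0 \<le> inner (poly_op ([:\<mu>\<^sup>2:] - q * q) A u) u" for u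
  proof -
    have "norm (poly_op q A u) \<le> \<mu> * norm u"
      using onorm[OF bounded_linear_poly_op[OF bounded_linear], of q u] assms
      by (meson mult_right_mono norm_ge_zero order_trans)
    then have "(norm (poly_op q A u))\<^sup>2 \<le> (\<mu> * norm u)\<^sup>2" by (intro power_mono) auto
    then show ?thesis unfolding inner_poly_op_sq_complement by (simp add: power_mult_distrib)
  qed
qed

lemma onorm_poly_op_less:
  assumes q: "\<forall>t\<in>{0..onorm A}. \<bar>poly q t\<bar> < \<mu>" and le: "onorm (poly_op q A) \<le> \<mu>"
  shows "onorm (poly_op q A) < \<mu>"
proof -
  define r where "r = [:\<mu>\<^sup>2:] - q * q"
  have \<mu>: "\<mu> > 0" using q onorm_nonneg by force
  have r_pos: "0 < poly r t" if "t \<in> {0..onorm A}" for t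
  proof -
    have "\<bar>poly q t\<bar> < \<mu>" using q that by blast
    then have "(poly q t)\<^sup>2 < \<mu>\<^sup>2" using power_strict_mono[of _ \<mu> 2] by force
    then show ?thesis by (simp add: r_def power2_eq_square)
  qed
  \<comment> \<open>\<open>r(A) = \<mu>\<^sup>2 - Q\<^sup>2\<close> is a positive operator that is bounded below, hence coercive,
    and this coercivity improves the bound \<open>\<parallel>Q\<parallel> \<le> \<mu>\<close>.\<close>
  interpret R: positive_operator "poly_op r A"
    unfolding r_def by (rule positive_operator_sq_complement[OF le])
  have "r \<noteq> 0" using r_pos[of 0] onorm_nonneg by auto
  then have "bounded_below (poly_op r A)" using r_pos bounded_below_poly_op by force
  then obtain \<delta> where \<delta>: "\<delta> > 0" "\<And>y. \<delta> * (norm y)\<^sup>2 \<le> inner (poly_op r A y) y"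
    using R.coercive_if_bounded_below by blast
  define \<epsilon> where "\<epsilon> = min \<delta> (\<mu>\<^sup>2)"
  have \<epsilon>: "0 < \<epsilon>" "\<epsilon> \<le> \<mu>\<^sup>2" using \<delta> \<mu> unfolding \<epsilon>_def by auto
  have "norm (poly_op q A y) \<le> sqrt (\<mu>\<^sup>2 - \<epsilon>) * norm y" for y
  proof -
    have "(norm (poly_op q A y))\<^sup>2 \<le> (\<mu>\<^sup>2 - \<epsilon>) * (norm y)\<^sup>2"
      using \<delta>(2)[of y] mult_right_mono[OF min.cobounded1[of \<delta> "\<mu>\<^sup>2"], of "(norm y)\<^sup>2"]
      unfolding r_def inner_poly_op_sq_complement \<epsilon>_def by (simp add: algebra_simps)
    then have "sqrt ((norm (poly_op q A y))\<^sup>2) \<le> sqrt ((\<mu>\<^sup>2 - \<epsilon>) * (norm y)\<^sup>2)"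
      by (rule real_sqrt_le_mono)
    then show ?thesis by (simp add: real_sqrt_mult)
  qed
  then have "onorm (poly_op q A) \<le> sqrt (\<mu>\<^sup>2 - \<epsilon>)" using \<epsilon>(2) by (intro onorm_bound) auto
  also have "\<dots> < sqrt (\<mu>\<^sup>2)" using \<epsilon> by (intro real_sqrt_less_mono) simp
  finally show ?thesis using \<mu> by simp
qed

lemma norm_poly_op_le:
  assumes "\<forall>t\<in>{0..onorm A}. \<bar>poly q t\<bar> \<le> M"
  shows "norm (poly_op q A x) \<le> M * norm x"
proof -
  have "onorm (poly_op q A) \<le> M"
  proof (rule ccontr)
    assume "\<not> onorm (poly_op q A) \<le> M"
    then have "\<forall>t\<in>{0..onorm A}. \<bar>poly q t\<bar> < onorm (poly_op q A)" using assms by force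
    then show False using onorm_poly_op_less[of q "onorm (poly_op q A)"] by simp
  qed
  then show ?thesis
    by (meson onorm[OF bounded_linear_poly_op[OF bounded_linear]] mult_right_mono norm_ge_zero
        order_trans)
qed

lemma poly_op_nonneg:
  assumes "\<forall>t\<in>{0..onorm A}. 0 \<le> poly p t"
  shows "0 \<le> inner (poly_op p A x) x"
proof -
  have "bounded (poly p ` {0..onorm A})"
    by (intro compact_imp_bounded compact_continuous_image continuous_intros) simp
  then obtain M where M: "\<forall>t\<in>{0..onorm A}. \<bar>poly p t\<bar> \<le> M"
    unfolding Elementary_Metric_Spaces.bounded_iff by auto
  \<comment> \<open>Center the range of \<open>p\<close> on \<open>[0, \<parallel>A\<parallel>]\<close> at \<open>0\<close>: then \<open>\<parallel>(p - M/2)(A)\<parallel> \<le> M/2\<close>.\<close>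
  have "\<bar>poly (p - [:M/2:]) t\<bar> \<le> M/2" if "t \<in> {0..onorm A}" for t
  proof -
    have "0 \<le> poly p t" "poly p t \<le> M" using M assms that by auto
    then show ?thesis by (auto simp: abs_if)
  qed
  then have "norm (poly_op (p - [:M/2:]) A x) \<le> M/2 * norm x" using norm_poly_op_le by blast
  then have "\<bar>inner (poly_op (p - [:M/2:]) A x) x\<bar> \<le> M/2 * norm x * norm x"
    using Cauchy_Schwarz_ineq2 mult_right_mono[OF _ norm_ge_zero] order_trans by blast
  then have "- (M/2 * (norm x)\<^sup>2) \<le> inner (poly_op (p - [:M/2:]) A x) x"
    by (simp add: power2_eq_square mult.assoc abs_le_iff)
  then show ?thesis
    by (simp add: poly_op_diff poly_op_const inner_diff_left abs_le_iff power2_norm_eq_inner)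
qed

lemma poly_op_ge:
  assumes "\<forall>t\<in>{0..onorm A}. c \<le> poly p t"
  shows "c * (norm x)\<^sup>2 \<le> inner (poly_op p A x) x"
  using poly_op_nonneg[of "p - [:c:]" x] assms
  by (simp add: poly_op_diff poly_op_const inner_diff_left power2_norm_eq_inner)

lemma poly_op_mono:
  assumes "\<forall>t\<in>{0..onorm A}. poly p t \<le> poly q t"
  shows "inner (poly_op p A x) x \<le> inner (poly_op q A x) x"
  using poly_op_nonneg[of "q - p" x] assms by (simp add: poly_op_diff inner_diff_left)

context
  fixes p c
  assumes c: "c > 0" and p_ge: "\<forall>t\<in>{0..onorm A}. c \<le> poly p t"
begin

lemma poly_op_injective: "poly_op p A x = poly_op p A y \<Longrightarrow> x = y"
  using poly_op_ge[OF p_ge, of "x - y"] c linear_diff[OF linear_poly_op[OF linear], of p x y]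
  by (simp add: mult_le_0_iff)

lemma poly_op_surjective: "\<exists>x. poly_op p A x = v"
proof -
  have "\<exists>x. \<forall>z. inner (poly_op p A x) z = inner v z"
    by (intro coercive_operator_represents_functional[OF _ poly_op_symmetric c poly_op_ge[OF p_ge]]
        bounded_linear_poly_op bounded_linear bounded_linear_inner_right)
  then show ?thesis using vector_eq_rdot by blast
qed

end

lemma norm_poly_op_sub_power_le:
  assumes k: "k \<ge> 1" and p: "\<forall>t\<in>{0..onorm A}. \<bar>poly p t - t powr real k\<bar> \<le> \<delta>"
  shows "norm (poly_op p A x - (A ^^ k) x) \<le> \<delta> * norm x"
proof -
  have "\<forall>t\<in>{0..onorm A}. \<bar>poly (p - monom 1 k) t\<bar> \<le> \<delta>"
    using p k by (auto simp: poly_monom powr_realpow')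
  then show ?thesis
    using norm_poly_op_le[of "p - monom 1 k" \<delta> x] by (simp add: poly_op_diff poly_op_monom[OF linear])
qed

text \<open>For \<open>k = 0\<close> this would fail, as \<open>0 powr 0 = 0\<close>.\<close>

lemma fcalc_power:
  assumes k: "k \<ge> 1"
  shows "fcalc A (\<lambda>t. t powr real k) x = (A ^^ k) x"
  unfolding fcalc_def
proof (rule the_equality)
  show "\<forall>\<epsilon>>0. \<exists>\<delta>>0. \<forall>p. (\<forall>t\<in>{0..onorm A}. \<bar>poly p t - t powr real k\<bar> < \<delta>) \<longrightarrow>
      norm (poly_op p A x - (A ^^ k) x) < \<epsilon>"
  proof (intro allI impI)
    fix \<epsilon> :: real assume "\<epsilon> > 0"
    moreover have "norm x + 1 > 0" by (simp add: add_nonneg_pos)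
    ultimately have \<delta>: "\<epsilon> / (norm x + 1) > 0" "\<epsilon> / (norm x + 1) * norm x < \<epsilon>"
      by (simp_all add: field_simps)
    show "\<exists>\<delta>>0. \<forall>p. (\<forall>t\<in>{0..onorm A}. \<bar>poly p t - t powr real k\<bar> < \<delta>) \<longrightarrow>
        norm (poly_op p A x - (A ^^ k) x) < \<epsilon>"
    proof (intro exI[of _ "\<epsilon> / (norm x + 1)"] conjI allI impI)
      fix p assume "\<forall>t\<in>{0..onorm A}. \<bar>poly p t - t powr real k\<bar> < \<epsilon> / (norm x + 1)"
      then have "norm (poly_op p A x - (A ^^ k) x) \<le> \<epsilon> / (norm x + 1) * norm x"
        by (intro norm_poly_op_sub_power_le[OF k]) (auto intro: less_imp_le)
      then show "norm (poly_op p A x - (A ^^ k) x) < \<epsilon>" using \<delta> by linarith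
    qed (fact \<delta>)
  qed
  fix y assume y: "\<forall>\<epsilon>>0. \<exists>\<delta>>0. \<forall>p. (\<forall>t\<in>{0..onorm A}. \<bar>poly p t - t powr real k\<bar> < \<delta>) \<longrightarrow>
      norm (poly_op p A x - y) < \<epsilon>"
  have "norm ((A ^^ k) x - y) < \<epsilon>" if \<epsilon>: "\<epsilon> > 0" for \<epsilon>
  proof -
    obtain \<delta> where "\<delta> > 0" and \<delta>: "\<And>p. \<forall>t\<in>{0..onorm A}. \<bar>poly p t - t powr real k\<bar> < \<delta> \<Longrightarrow>
        norm (poly_op p A x - y) < \<epsilon>"
      using y \<epsilon> by blast
    \<comment> \<open>The monomial itself approximates \<open>t\<^sup>k\<close> exactly.\<close>
    have "\<forall>t\<in>{0..onorm A}. \<bar>poly (monom 1 k) t - t powr real k\<bar> < \<delta>"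
      using \<open>\<delta> > 0\<close> k by (auto simp: poly_monom powr_realpow')
    then have "norm (poly_op (monom 1 k) A x - y) < \<epsilon>" by (rule \<delta>)
    then show ?thesis by (simp add: poly_op_monom[OF linear])
  qed
  then have "norm ((A ^^ k) x - y) = 0" by (metis norm_ge_zero order_less_irrefl order_le_less)
  then show "y = (A ^^ k) x" by simp
qed

lemma sq_norm_resolvent_power_ge:
  assumes "k \<ge> 1" "\<alpha> \<ge> 0"
  shows "(\<alpha> ^ k)\<^sup>2 * (norm x)\<^sup>2 + (norm ((A ^^ k) x))\<^sup>2 \<le> (norm (poly_op ([:\<alpha>, 1:] ^ k) A x))\<^sup>2"
proof -
  have "poly ([:(\<alpha> ^ k)\<^sup>2:] + monom 1 k * monom 1 k) l \<le> poly ([:\<alpha>, 1:] ^ k * [:\<alpha>, 1:] ^ k) l"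
    if "l \<ge> 0" for l
  proof -
    have "l ^ k + \<alpha> ^ k \<le> (\<alpha> + l) ^ k" using assms that by (subst add.commute) (rule power_add_le_add_power)
    then have "(l ^ k + \<alpha> ^ k)\<^sup>2 \<le> ((\<alpha> + l) ^ k)\<^sup>2" using assms that by (intro power_mono) auto
    moreover have "(l ^ k)\<^sup>2 + (\<alpha> ^ k)\<^sup>2 \<le> (l ^ k + \<alpha> ^ k)\<^sup>2"
      using assms that by (simp add: power2_eq_square algebra_simps)
    ultimately show ?thesis by (simp add: poly_monom poly_power power2_eq_square)
  qed
  then have "inner (poly_op ([:(\<alpha> ^ k)\<^sup>2:] + monom 1 k * monom 1 k) A x) x
      \<le> inner (poly_op ([:\<alpha>, 1:] ^ k * [:\<alpha>, 1:] ^ k) A x) x"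
    by (intro poly_op_mono) auto
  then show ?thesis
    using norm_poly_op_sq[of "monom 1 k" x] norm_poly_op_sq[of "[:\<alpha>, 1:] ^ k" x]
    by (simp add: poly_op_add poly_op_const inner_add_left power2_norm_eq_inner
        poly_op_monom[OF linear])
qed

text \<open>The upper estimate: the error of the regularized solution is dominated by the
  \<open>K\<close>-functional at \<open>t = \<alpha>\<^sup>k\<close>.\<close>

lemma sq_norm_le_if_resolvent_power_eq:
  assumes k: "k \<ge> 1" and \<alpha>: "\<alpha> > 0"
    and w: "poly_op ([:\<alpha>, 1:] ^ k) A w = \<alpha> ^ k *\<^sub>R e"
  shows "(norm w)\<^sup>2 \<le> (norm (e - (A ^^ k) z))\<^sup>2 + (\<alpha> ^ k)\<^sup>2 * (norm z)\<^sup>2"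
proof -
  let ?P = "poly_op ([:\<alpha>, 1:] ^ k) A" and ?M = "A ^^ k" and ?c = "\<alpha> ^ k"
  have P_ge: "\<forall>t\<in>{0..onorm A}. ?c \<le> poly ([:\<alpha>, 1:] ^ k) t"
    using \<alpha> by (auto simp: poly_power intro!: power_mono)
  obtain a b where a: "?P a = e - ?M z" and b: "?P b = z"
    using poly_op_surjective[OF _ P_ge] \<alpha> by (metis zero_less_power)
  have M_op: "?M u = poly_op (monom 1 k) A u" for u by (simp add: poly_op_monom[OF linear])
  have "?P (?c *\<^sub>R (a + ?M b)) = ?c *\<^sub>R (?P a + ?M (?P b))"
    using linear_poly_op[OF linear] unfolding M_op
    by (simp add: linear_add linear_scale poly_op_commute[OF linear])
  also have "\<dots> = ?P w" by (simp add: a b w)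
  finally have "?P w = ?P (?c *\<^sub>R (a + ?M b))" ..
  then have w_eq: "w = ?c *\<^sub>R (a + ?M b)"
    using poly_op_injective[OF _ P_ge] \<alpha> by simp
  have "(norm (a + ?M b))\<^sup>2 = (norm a)\<^sup>2 + 2 * inner a (?M b) + (norm (?M b))\<^sup>2"
    using dot_norm[of a "?M b"] by simp
  then have "(norm w)\<^sup>2 = ?c\<^sup>2 * ((norm a)\<^sup>2 + 2 * inner a (?M b) + (norm (?M b))\<^sup>2)"
    unfolding w_eq by (simp add: power_mult_distrib)
  \<comment> \<open>\<open>2 c\<^sup>2 \<langle>A\<^sup>k a, b\<rangle> \<le> \<parallel>A\<^sup>k a\<parallel>\<^sup>2 + c\<^sup>4 \<parallel>b\<parallel>\<^sup>2\<close>\<close>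
  moreover have "2 * ?c\<^sup>2 * inner a (?M b) \<le> (norm (?M a))\<^sup>2 + ?c\<^sup>2 * ?c\<^sup>2 * (norm b)\<^sup>2"
  proof -
    have "inner a (?M b) = inner (?M a) b"
      unfolding M_op by (rule poly_op_symmetric[symmetric])
    moreover have "2 * inner (?M a) (?c\<^sup>2 *\<^sub>R b) \<le> (norm (?M a))\<^sup>2 + (norm (?c\<^sup>2 *\<^sub>R b))\<^sup>2"
      unfolding dot_norm_neg[of "?M a" "?c\<^sup>2 *\<^sub>R b"] by simp
    ultimately show ?thesis by (simp add: power_mult_distrib mult_ac)
  qed
  ultimately have "(norm w)\<^sup>2
      \<le> (?c\<^sup>2 * (norm a)\<^sup>2 + (norm (?M a))\<^sup>2) + ?c\<^sup>2 * (?c\<^sup>2 * (norm b)\<^sup>2 + (norm (?M b))\<^sup>2)"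
    by (simp add: algebra_simps)
  also have "\<dots> \<le> (norm (?P a))\<^sup>2 + ?c\<^sup>2 * (norm (?P b))\<^sup>2"
    using sq_norm_resolvent_power_ge[OF k, of \<alpha>] \<alpha> by (intro add_mono mult_left_mono) auto
  finally show ?thesis unfolding a b .
qed

text \<open>The lower estimate: the \<open>K\<close>-functional at \<open>t\<close> is controlled by the Tikhonov error for the
  \<open>\<alpha>\<close> balanced against \<open>t\<close> and the weight \<open>w\<close>.\<close>

lemma K_bound_if_resolvent_power_eq:
  assumes k: "k \<ge> 1" and \<alpha>: "\<alpha> > 0" and t: "t > 0" and w: "0 < w" "w < 1"
    and balance: "\<alpha> ^ (2*k) * (1 - w) ^ (2*k - 1) = t\<^sup>2 * w ^ (2*k - 1)"
    and v: "poly_op ([:\<alpha>, 1:] ^ k) A v = \<alpha> ^ k *\<^sub>R e"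
  shows "\<exists>z. (norm (e - (A ^^ k) z))\<^sup>2 + t\<^sup>2 * (norm z)\<^sup>2 \<le> (norm v)\<^sup>2 / w ^ (2*k - 1)"
proof -
  define P M S where "P = [:\<alpha>, 1:] ^ k" and "M = (monom 1 k :: real poly)"
    and "S = monom 1 k * monom 1 k + [:t\<^sup>2:]"
  define c W where "c = \<alpha> ^ k" and "W = w ^ (2*k - 1)"
  have c: "c > 0" unfolding c_def using \<alpha> by simp
  have poly_S: "poly S l = l ^ (2*k) + t\<^sup>2" for l
    by (simp add: S_def poly_monom power_mult power2_eq_square mult.commute)
  obtain h where h: "poly_op S A h = v"
    using poly_op_surjective[of "t\<^sup>2" S] t by (auto simp: poly_S)
  \<comment> \<open>The near-minimizer of the \<open>K\<close>-functional.\<close>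
  define z where "z = (1/c) *\<^sub>R poly_op (M * P) A h"
  have "poly_op P A v = c *\<^sub>R e" using v by (simp add: P_def c_def)
  then have "e = (1/c) *\<^sub>R poly_op (P * S) A h" using c by (simp add: h poly_op_mult[OF linear])
  moreover have "P * S = M * (M * P) + smult (t\<^sup>2) P" by (simp add: S_def M_def algebra_simps)
  moreover have "(A ^^ k) z = (1/c) *\<^sub>R poly_op (M * (M * P)) A h"
    unfolding z_def M_def
    by (simp add: linear_scale[OF linear_poly_op[OF linear]] poly_op_mult[OF linear]
        flip: poly_op_monom[OF linear])
  ultimately have e: "e - (A ^^ k) z = (t\<^sup>2 / c) *\<^sub>R poly_op P A h"
    by (simp add: poly_op_add poly_op_smult algebra_simps)
  define p1 where "p1 = smult (t\<^sup>2 / c\<^sup>2) (smult (t\<^sup>2) (P * P) + (M * P) * (M * P))"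
  define p2 where "p2 = smult (1 / W) (S * S)"
  have "(norm (e - (A ^^ k) z))\<^sup>2 + t\<^sup>2 * (norm z)\<^sup>2
      = (t\<^sup>2 / c)\<^sup>2 * (norm (poly_op P A h))\<^sup>2 + t\<^sup>2 * (1 / c)\<^sup>2 * (norm (poly_op (M * P) A h))\<^sup>2"
    unfolding e using c by (simp add: z_def power_mult_distrib power_divide)
  also have "\<dots> = inner (poly_op p1 A h) h"
    unfolding p1_def norm_poly_op_sq
    by (simp add: poly_op_smult poly_op_add inner_add_left field_simps power2_eq_square)
  also have "\<dots> \<le> inner (poly_op p2 A h) h"
  proof (rule poly_op_mono, intro ballI)
    fix l assume "l \<in> {0..onorm A}"
    then have "0 \<le> poly S l" by (simp add: poly_S)
    then have "t\<^sup>2 / \<alpha> ^ (2*k) * (l + \<alpha>) ^ (2*k) * poly S l \<le> (l ^ (2*k) + t\<^sup>2) / W * poly S l"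
      unfolding W_def by (rule mult_right_mono[OF scaled_shifted_power_le[OF w k \<alpha> balance]])
    then show "poly p1 l \<le> poly p2 l"
      by (simp add: p1_def p2_def P_def M_def c_def poly_S poly_monom poly_power
          power_mult power2_eq_square field_simps mult.commute)
  qed
  also have "\<dots> = (norm v)\<^sup>2 / W"
    by (simp add: p2_def poly_op_smult flip: h norm_poly_op_sq)
  finally show ?thesis unfolding W_def by blast
qed

lemma norm_resolvent_power_antimono:
  assumes \<alpha>: "0 < \<alpha>" "\<alpha> \<le> \<beta>"
    and u: "poly_op ([:\<alpha>, 1:] ^ k) A u = e" and v: "poly_op ([:\<beta>, 1:] ^ k) A v = e"
  shows "norm v \<le> norm u"
proof -
  have ge: "\<forall>t\<in>{0..onorm A}. \<gamma> ^ k \<le> poly ([:\<gamma>, 1:] ^ k) t" if "\<gamma> > 0" for \<gamma>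
    using that by (auto simp: poly_power intro!: power_mono)
  have \<beta>: "\<beta> > 0" using \<alpha> by simp
  obtain g where g: "poly_op ([:\<alpha>, 1:] ^ k * [:\<beta>, 1:] ^ k) A g = e"
    using poly_op_surjective[of "\<alpha> ^ k * \<beta> ^ k"] \<alpha> \<beta> ge[of \<alpha>] ge[of \<beta>]
    by (force simp: poly_power intro!: mult_mono)
  \<comment> \<open>Both solutions are obtained from \<open>g\<close> by applying the other factor.\<close>
  have "u = poly_op ([:\<beta>, 1:] ^ k) A g"
    using poly_op_injective[OF _ ge[OF \<alpha>(1)]] \<alpha> u g by (simp add: poly_op_mult[OF linear])
  moreover have "v = poly_op ([:\<alpha>, 1:] ^ k) A g"
    using poly_op_injective[OF _ ge[OF \<beta>]] \<beta> v g
    by (simp add: poly_op_mult[OF linear] poly_op_commute[OF linear])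
  moreover have "inner (poly_op ([:\<alpha>, 1:] ^ k * [:\<alpha>, 1:] ^ k) A g) g
      \<le> inner (poly_op ([:\<beta>, 1:] ^ k * [:\<beta>, 1:] ^ k) A g) g"
    using \<alpha> by (intro poly_op_mono) (auto simp: poly_power intro!: mult_mono power_mono)
  ultimately have "(norm v)\<^sup>2 \<le> (norm u)\<^sup>2" by (simp add: norm_poly_op_sq)
  then show ?thesis by (simp add: power_mono_iff)
qed

end

section \<open>Iterated Tikhonov regularization\<close>

locale injective_operator =
  fixes T :: "'a::{real_inner,complete_space} \<Rightarrow> 'b::{real_inner,complete_space}"
  assumes bounded_linear: "bounded_linear T" and injective: "inj T"
begin

definition A :: "'a \<Rightarrow> 'a" where "A = adj T \<circ> T"

lemma inner_A: "inner (A u) v = inner (T u) (T v)"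
  using adj_inner[OF bounded_linear, of v "T u"] by (simp add: A_def inner_commute)

sublocale A: positive_operator A
proof (rule positive_operator.intro)
  interpret T: bounded_linear T by (fact bounded_linear)
  obtain K where K: "\<And>x. norm (T x) \<le> norm x * K" "K \<ge> 0"
    using T.pos_bounded by (auto intro: less_imp_le)
  have "A (u + v) = A u + A v" "A (r *\<^sub>R u) = r *\<^sub>R A u" for r u v
    by (simp_all add: vector_eq_rdot[symmetric] inner_A T.add T.scale inner_add_left)
  moreover have "norm (A u) \<le> norm u * (K * K)" for u
  proof -
    have "(norm (A u))\<^sup>2 \<le> norm (T u) * norm (T (A u))"
      using norm_cauchy_schwarz[of "T u" "T (A u)"] by (simp add: power2_norm_eq_inner inner_A)
    also have "\<dots> \<le> (norm u * K) * (norm (A u) * K)" using K by (intro mult_mono) auto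
    finally have "norm (A u) * norm (A u) \<le> norm (A u) * (norm u * (K * K))"
      by (simp add: power2_eq_square algebra_simps)
    then show ?thesis by (cases "A u = 0") (auto simp: mult_le_cancel_left)
  qed
  ultimately show "bounded_linear A"
    by (intro bounded_linear_intro[where K = "K * K"]) auto
  show "inner (A u) v = inner u (A v)" for u v by (metis inner_A inner_commute)
  show "0 \<le> inner (A u) u" for u by (simp add: inner_A)
qed

lemma A_power_injective: "(A ^^ k) u = (A ^^ k) v \<Longrightarrow> u = v"
proof (induction k arbitrary: u v)
  case (Suc k)
  have "inner (T ((A ^^ k) u - (A ^^ k) v)) (T ((A ^^ k) u - (A ^^ k) v)) = 0"
    using Suc.prems by (simp flip: inner_A add: linear_diff[OF A.linear])
  then have "T ((A ^^ k) u) = T ((A ^^ k) v)"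
    using linear_diff[OF bounded_linear.linear[OF bounded_linear]] by simp
  then show ?case using Suc.IH injective by (simp add: inj_eq)
qed simp

lemma TTpow_eq_power: "k \<ge> 1 \<Longrightarrow> TTpow T (real k) = A ^^ k"
  by (simp add: TTpow_def fun_eq_iff A.fcalc_power flip: A_def)

lemma Kfun_eq_INF:
  assumes "k \<ge> 1"
  shows "Kfun T (real k) t e = (INF z. sqrt ((norm (e - (A ^^ k) z))\<^sup>2 + t\<^sup>2 * (norm z)\<^sup>2))"
proof -
  have "gnorm T (real k) ((A ^^ k) z) = norm z" for z
    using A_power_injective assms by (simp add: gnorm_def TTpow_eq_power the_equality)
  then show ?thesis
    using assms by (simp add: Kfun_def Xspace_def TTpow_eq_power image_image)
qed

lemma Kfun_le:
  "k \<ge> 1 \<Longrightarrow> Kfun T (real k) t e \<le> sqrt ((norm (e - (A ^^ k) z))\<^sup>2 + t\<^sup>2 * (norm z)\<^sup>2)"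
  unfolding Kfun_eq_INF by (rule cInf_lower) (auto intro: bdd_belowI2[where m = 0])

lemma Kfun_ge:
  "k \<ge> 1 \<Longrightarrow> (\<And>z. m \<le> sqrt ((norm (e - (A ^^ k) z))\<^sup>2 + t\<^sup>2 * (norm z)\<^sup>2)) \<Longrightarrow>
    m \<le> Kfun T (real k) t e"
  unfolding Kfun_eq_INF by (rule cINF_greatest) auto

lemma tikhonov_functional_expand:
  assumes x: "poly_op [:\<alpha>, 1:] A x = A xd + \<alpha> *\<^sub>R c"
  shows "(norm (T xd - T z))\<^sup>2 + \<alpha> * (norm (z - c))\<^sup>2
    = (norm (T xd - T x))\<^sup>2 + \<alpha> * (norm (x - c))\<^sup>2 + (norm (T (z - x)))\<^sup>2 + \<alpha> * (norm (z - x))\<^sup>2"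
proof -
  interpret T: bounded_linear T by (fact bounded_linear)
  define d where "d = z - x"
  have "inner (T xd - T x) (T d) = inner (A xd - A x) d" by (simp add: inner_A inner_diff_left)
  also have "A xd - A x = \<alpha> *\<^sub>R (x - c)"
    using x by (simp add: poly_op_pCons[OF A.linear] poly_op_const algebra_simps)
  finally have cross: "inner (T xd - T x) (T d) = \<alpha> * inner (x - c) d" by simp
  have "(norm (T xd - T z))\<^sup>2 + \<alpha> * (norm (z - c))\<^sup>2
      = (norm ((T xd - T x) - T d))\<^sup>2 + \<alpha> * (norm ((x - c) + d))\<^sup>2"
    unfolding d_def by (simp add: T.diff algebra_simps)
  also have "(norm ((T xd - T x) - T d))\<^sup>2
      = (norm (T xd - T x))\<^sup>2 - 2 * inner (T xd - T x) (T d) + (norm (T d))\<^sup>2"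
    using dot_norm_neg[of "T xd - T x" "T d"] by simp
  also have "(norm ((x - c) + d))\<^sup>2 = (norm (x - c))\<^sup>2 + 2 * inner (x - c) d + (norm d)\<^sup>2"
    using dot_norm[of "x - c" d] by simp
  finally have "(norm (T xd - T z))\<^sup>2 + \<alpha> * (norm (z - c))\<^sup>2
      = (norm (T xd - T x))\<^sup>2 + \<alpha> * (norm (x - c))\<^sup>2 + (norm (T d))\<^sup>2 + \<alpha> * (norm d)\<^sup>2"
    unfolding cross by (simp add: algebra_simps)
  then show ?thesis unfolding d_def .
qed

lemma tikh_Suc_error:
  assumes \<alpha>: "\<alpha> > 0"
  shows "poly_op [:\<alpha>, 1:] A (xd - tikh T (T xd) x0 \<alpha> (Suc j)) = \<alpha> *\<^sub>R (xd - tikh T (T xd) x0 \<alpha> j)"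
proof -
  define c where "c = tikh T (T xd) x0 \<alpha> j"
  obtain x where x: "poly_op [:\<alpha>, 1:] A x = A xd + \<alpha> *\<^sub>R c"
    using A.poly_op_surjective[of \<alpha> "[:\<alpha>, 1:]"] \<alpha> by auto
  define J where "J z = (norm (T xd - T z))\<^sup>2 + \<alpha> * (norm (z - c))\<^sup>2" for z
  have J: "J z = J x + ((norm (T (z - x)))\<^sup>2 + \<alpha> * (norm (z - x))\<^sup>2)" for z
    unfolding J_def using tikhonov_functional_expand[OF x, of z] by linarith
  have "tikh T (T xd) x0 \<alpha> (Suc j) = x"
    unfolding tikh.simps c_def[symmetric] J_def[symmetric]
  proof (rule the_equality)
    have "0 \<le> (norm (T (z - x)))\<^sup>2 + \<alpha> * (norm (z - x))\<^sup>2" for z using \<alpha> by simp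
    then show "\<forall>z. J x \<le> J z" using J by (metis le_add_same_cancel1)
    fix x' assume "\<forall>z. J x' \<le> J z"
    then have "J x' \<le> J x" by blast
    then have "(norm (T (x' - x)))\<^sup>2 + \<alpha> * (norm (x' - x))\<^sup>2 \<le> 0" using J[of x'] by linarith
    then have "\<alpha> * (norm (x' - x))\<^sup>2 \<le> 0" using zero_le_power2[of "norm (T (x' - x))"] by linarith
    then show "x' = x" using \<alpha> by (simp add: mult_le_0_iff)
  qed
  then show ?thesis
    using x by (simp add: c_def poly_op_pCons[OF A.linear] poly_op_const linear_diff[OF A.linear]
        algebra_simps)
qed

lemma tikh_error:
  assumes "\<alpha> > 0"
  shows "poly_op ([:\<alpha>, 1:] ^ j) A (xd - tikh T (T xd) x0 \<alpha> j) = \<alpha> ^ j *\<^sub>R (xd - x0)"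
proof (induction j)
  case (Suc j)
  have "poly_op ([:\<alpha>, 1:] ^ Suc j) A (xd - tikh T (T xd) x0 \<alpha> (Suc j))
      = \<alpha> *\<^sub>R poly_op ([:\<alpha>, 1:] ^ j) A (xd - tikh T (T xd) x0 \<alpha> j)"
    by (simp only: power_Suc2 poly_op_mult[OF A.linear] tikh_Suc_error[OF assms]
        linear_scale[OF linear_poly_op[OF A.linear]])
  then show ?case using Suc by simp
qed (simp add: poly_op_def)

lemma norm_tikh_error_le_Kfun:
  assumes k: "k \<ge> 1" and \<alpha>: "\<alpha> > 0"
  shows "norm (xd - tikh T (T xd) x0 \<alpha> k) \<le> Kfun T (real k) (\<alpha> ^ k) (xd - x0)"
  using A.sq_norm_le_if_resolvent_power_eq[OF k \<alpha> tikh_error[OF \<alpha>]]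
  by (intro Kfun_ge[OF k] real_le_rsqrt)

lemma Kfun_le_norm_tikh_error:
  assumes k: "k \<ge> 1" and t: "t > 0" and w: "0 < w" "w < 1"
  obtains \<alpha> where "\<alpha> > 0"
    "t powr (-\<theta>) * Kfun T (real k) t (xd - x0)
       \<le> (w powr (1 - \<theta>) * (1 - w) powr \<theta>) powr (- (real (2*k - 1) / 2))
         * (\<alpha> powr (- (\<theta> * real k)) * norm (xd - tikh T (T xd) x0 \<alpha> k))"
proof -
  obtain \<alpha> where \<alpha>: "\<alpha> > 0" and balance: "\<alpha> ^ (2*k) * (1 - w) ^ (2*k - 1) = t\<^sup>2 * w ^ (2*k - 1)"
    and G: "t powr (-\<theta>) * \<alpha> powr (\<theta> * real k) / sqrt (w ^ (2*k - 1))
       = (w powr (1 - \<theta>) * (1 - w) powr \<theta>) powr (- (real (2*k - 1) / 2))"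
    using balanced_parameter_exists[OF t w k] by blast
  define v where "v = xd - tikh T (T xd) x0 \<alpha> k"
  obtain z where "(norm (xd - x0 - (A ^^ k) z))\<^sup>2 + t\<^sup>2 * (norm z)\<^sup>2 \<le> (norm v)\<^sup>2 / w ^ (2*k - 1)"
    using A.K_bound_if_resolvent_power_eq[OF k \<alpha> t w balance tikh_error[OF \<alpha>]] unfolding v_def
    by blast
  then have "Kfun T (real k) t (xd - x0) \<le> sqrt ((norm v)\<^sup>2 / w ^ (2*k - 1))"
    using Kfun_le[OF k] real_sqrt_le_mono order_trans by blast
  also have "\<dots> = norm v / sqrt (w ^ (2*k - 1))" by (simp add: real_sqrt_divide)
  finally have "t powr (-\<theta>) * Kfun T (real k) t (xd - x0) \<le> t powr (-\<theta>) * (norm v / sqrt (w ^ (2*k - 1)))"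
    using t by (intro mult_left_mono) auto
  also have "\<dots> = t powr (-\<theta>) * \<alpha> powr (\<theta> * real k) / sqrt (w ^ (2*k - 1))
      * (\<alpha> powr (- (\<theta> * real k)) * norm v)"
    using \<alpha> by (simp add: powr_minus field_simps)
  finally show thesis using that[OF \<alpha>] unfolding G v_def by blast
qed

lemma tikh_SUP_le_interp_norm:
  assumes k: "k \<ge> 1"
  shows "(SUP \<alpha>\<in>{0<..}. ereal (\<alpha> powr (-\<nu>) * norm (xd - tikh T (T xd) x0 \<alpha> k)))
    \<le> interp_norm T \<nu> (real k) (xd - x0)"
  unfolding interp_norm_def
proof (rule SUP_least)
  fix \<alpha> :: real assume "\<alpha> \<in> {0<..}"
  then have \<alpha>: "\<alpha> > 0" by simp
  \<comment> \<open>Evaluate the supremum defining the interpolation norm at \<open>t = \<alpha>\<^sup>k\<close>.\<close>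
  have "(\<alpha> ^ k) powr (-\<nu> / real k) = \<alpha> powr (-\<nu>)"
    using \<alpha> k by (simp add: powr_powr flip: powr_realpow)
  then have "\<alpha> powr (-\<nu>) * norm (xd - tikh T (T xd) x0 \<alpha> k)
      \<le> (\<alpha> ^ k) powr (-\<nu> / real k) * Kfun T (real k) (\<alpha> ^ k) (xd - x0)"
    using norm_tikh_error_le_Kfun[OF k \<alpha>] by (simp add: mult_left_mono)
  also have "ereal \<dots> \<le> (SUP t\<in>{0<..}. ereal (t powr (-\<nu> / real k) * Kfun T (real k) t (xd - x0)))"
    using \<alpha> by (intro SUP_upper) auto
  finally show "ereal (\<alpha> powr (-\<nu>) * norm (xd - tikh T (T xd) x0 \<alpha> k)) \<le> \<dots>" by simp
qed

lemma Nconst_interp_norm_le_tikh_SUP: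
  assumes k: "k \<ge> 1" and \<nu>: "0 \<le> \<nu>" "\<nu> \<le> real k"
  shows "ereal (Nconst (\<nu> / real k) powr (1 - 2 * real k)) * interp_norm T \<nu> (real k) (xd - x0)
    \<le> (SUP \<alpha>\<in>{0<..}. ereal (\<alpha> powr (-\<nu>) * norm (xd - tikh T (T xd) x0 \<alpha> k)))"
    (is "ereal ?c * _ \<le> ?S")
proof -
  define \<theta> where "\<theta> = \<nu> / real k"
  have \<theta>: "0 \<le> \<theta>" "\<theta> \<le> 1" "\<nu> = \<theta> * real k" unfolding \<theta>_def using k \<nu> by auto
  have "Nconst \<theta> > 0" by (auto simp: Nconst_def)
  then have c: "?c > 0" unfolding \<theta>_def by simp
  have Kfun_nonneg: "0 \<le> Kfun T (real k) t (xd - x0)" for t by (rule Kfun_ge[OF k]) simp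
  have "ereal (?c * (t powr (-\<theta>) * Kfun T (real k) t (xd - x0))) \<le> ?S" if t: "t > 0" for t
  proof (cases ?S)
    case (real s)
    have exponent: "1 - 2 * real k = - 2 * (real (2*k - 1) / 2)" using k by (simp add: of_nat_diff)
    have "?c * (t powr (-\<theta>) * Kfun T (real k) t (xd - x0)) \<le> s"
      unfolding \<theta>_def[symmetric] exponent
    proof (rule Nconst_powr_mult_le[OF \<theta>(1,2)])
      fix w :: real assume w: "0 < w" "w < 1"
      obtain \<alpha> where "\<alpha> > 0" and le: "t powr (-\<theta>) * Kfun T (real k) t (xd - x0)
          \<le> (w powr (1 - \<theta>) * (1 - w) powr \<theta>) powr (- (real (2*k - 1) / 2))
            * (\<alpha> powr (- (\<theta> * real k)) * norm (xd - tikh T (T xd) x0 \<alpha> k))"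
        using Kfun_le_norm_tikh_error[OF k t w] by blast
      have "ereal (\<alpha> powr (-\<nu>) * norm (xd - tikh T (T xd) x0 \<alpha> k)) \<le> ?S"
        using \<open>\<alpha> > 0\<close> by (intro SUP_upper) auto
      then have "\<alpha> powr (- (\<theta> * real k)) * norm (xd - tikh T (T xd) x0 \<alpha> k) \<le> s"
        using real \<theta>(3) by simp
      then show "t powr (-\<theta>) * Kfun T (real k) t (xd - x0)
          \<le> (w powr (1 - \<theta>) * (1 - w) powr \<theta>) powr (- (real (2*k - 1) / 2)) * s"
        using le by (meson order_trans mult_left_mono powr_ge_zero)
    qed
    then show ?thesis using real by simp
  qed (use SUP_upper[of 1 "{0<..}" "\<lambda>\<alpha>. ereal (\<alpha> powr (-\<nu>) * norm (xd - tikh T (T xd) x0 \<alpha> k))"]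
    in auto)
  then have "(SUP t\<in>{0<..}. ereal ?c * ereal (t powr (-\<theta>) * Kfun T (real k) t (xd - x0))) \<le> ?S"
    by (intro SUP_least) auto
  moreover have "(SUP t\<in>{0<..}. ereal ?c * ereal (t powr (-\<theta>) * Kfun T (real k) t (xd - x0)))
      = ereal ?c * interp_norm T \<nu> (real k) (xd - x0)"
    unfolding interp_norm_def \<theta>_def minus_divide_left
    by (rule SUP_ereal_mult_left) (use c Kfun_nonneg in auto)
  ultimately show ?thesis by simp
qed

lemma tikh_tendsto_SUP:
  fixes xd x0 :: 'a
  assumes "k \<ge> 1"
  defines "f \<equiv> \<lambda>\<alpha>. \<alpha> powr (- real k) * norm (xd - tikh T (T xd) x0 \<alpha> k)"
  shows "((\<lambda>\<alpha>. ereal (f \<alpha>)) \<longlongrightarrow> (SUP \<alpha>\<in>{0<..}. ereal (f \<alpha>))) (at_right 0)"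
proof -
  \<comment> \<open>For \<open>\<nu> = k\<close> the scaled error \<open>\<alpha>\<^sup>-\<^sup>k (x\<^sup>\<dagger> - x\<^sub>\<alpha>\<^sub>,\<^sub>k)\<close> solves \<open>(\<alpha> + A)\<^sup>k u = x\<^sup>\<dagger> - x\<^sub>0\<close>,
    whose solution decreases in norm as \<open>\<alpha>\<close> grows.\<close>
  have u: "poly_op ([:\<alpha>, 1:] ^ k) A (\<alpha> powr (- real k) *\<^sub>R (xd - tikh T (T xd) x0 \<alpha> k)) = xd - x0"
    if "\<alpha> > 0" for \<alpha>
    using tikh_error[OF that] that
    by (simp add: linear_scale[OF linear_poly_op[OF A.linear]] powr_minus powr_realpow)
  have le_SUP: "ereal (f \<alpha>) \<le> (SUP \<alpha>\<in>{0<..}. ereal (f \<alpha>))" if "\<alpha> > 0" for \<alpha>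
    using that by (intro SUP_upper) auto
  have anti: "f \<beta> \<le> f \<alpha>" if "0 < \<alpha>" "\<alpha> \<le> \<beta>" for \<alpha> \<beta>
    using A.norm_resolvent_power_antimono[OF that u u] that unfolding f_def by simp
  show ?thesis
  proof (rule order_tendstoI)
    fix y assume "y < (SUP \<alpha>\<in>{0<..}. ereal (f \<alpha>))"
    then obtain \<alpha>0 where \<alpha>0: "\<alpha>0 > 0" "y < ereal (f \<alpha>0)" by (auto simp: less_SUP_iff)
    have "eventually (\<lambda>\<alpha>. \<alpha> \<in> {0<..<\<alpha>0}) (at_right (0::real))"
      by (rule eventually_at_right_real) (fact \<alpha>0(1))
    then show "eventually (\<lambda>\<alpha>. y < ereal (f \<alpha>)) (at_right 0)"
      by eventually_elim (use \<alpha>0 anti in \<open>fastforce intro: less_le_trans\<close>)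
  next
    fix y assume y: "(SUP \<alpha>\<in>{0<..}. ereal (f \<alpha>)) < y"
    show "eventually (\<lambda>\<alpha>. ereal (f \<alpha>) < y) (at_right 0)"
      using eventually_at_right_less[of "0::real"]
      by eventually_elim (use y le_SUP in \<open>auto intro: le_less_trans\<close>)
  qed
qed

end

theorem proposition4:
  fixes T :: "'a::{real_inner,complete_space} \<Rightarrow> 'b::{real_inner,complete_space}"
    and xd x0 :: 'a and k :: nat and \<nu> :: real
  assumes "bounded_linear T" and "inj T" and "T \<noteq> (\<lambda>x. 0)"
    and "k \<ge> 1" and "0 \<le> \<nu>" and "\<nu> \<le> real k"
  shows "ereal (Nconst (\<nu> / real k) powr (1 - 2 * real k)) * interp_norm T \<nu> (real k) (xd - x0)
           \<le> (SUP \<alpha>\<in>{0<..}. ereal (\<alpha> powr (-\<nu>) * norm (xd - tikh T (T xd) x0 \<alpha> k)))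
       \<and> (SUP \<alpha>\<in>{0<..}. ereal (\<alpha> powr (-\<nu>) * norm (xd - tikh T (T xd) x0 \<alpha> k)))
           \<le> interp_norm T \<nu> (real k) (xd - x0)
       \<and> (\<nu> = real k \<longrightarrow> (\<exists>L.
            ((\<lambda>\<alpha>. ereal (\<alpha> powr (-\<nu>) * norm (xd - tikh T (T xd) x0 \<alpha> k))) \<longlongrightarrow> L) (at_right 0)
          \<and> ereal (Nconst (\<nu> / real k) powr (1 - 2 * real k)) * interp_norm T \<nu> (real k) (xd - x0) \<le> L
          \<and> L \<le> interp_norm T \<nu> (real k) (xd - x0)))"
proof -
  interpret injective_operator T by (rule injective_operator.intro) (fact assms(1,2))+
  have lower: "ereal (Nconst (\<nu> / real k) powr (1 - 2 * real k)) * interp_norm T \<nu> (real k) (xd - x0)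
      \<le> (SUP \<alpha>\<in>{0<..}. ereal (\<alpha> powr (-\<nu>) * norm (xd - tikh T (T xd) x0 \<alpha> k)))"
    using Nconst_interp_norm_le_tikh_SUP assms(4-6) .
  moreover have upper: "(SUP \<alpha>\<in>{0<..}. ereal (\<alpha> powr (-\<nu>) * norm (xd - tikh T (T xd) x0 \<alpha> k)))
      \<le> interp_norm T \<nu> (real k) (xd - x0)"
    using tikh_SUP_le_interp_norm assms(4) .
  moreover have "\<exists>L. ((\<lambda>\<alpha>. ereal (\<alpha> powr (-\<nu>) * norm (xd - tikh T (T xd) x0 \<alpha> k))) \<longlongrightarrow> L) (at_right 0)
      \<and> ereal (Nconst (\<nu> / real k) powr (1 - 2 * real k)) * interp_norm T \<nu> (real k) (xd - x0) \<le> L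
      \<and> L \<le> interp_norm T \<nu> (real k) (xd - x0)" if "\<nu> = real k"
    using tikh_tendsto_SUP[OF assms(4), of xd x0] lower upper that by blast
  ultimately show ?thesis by blast
qed

end
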